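(* For all integers $i\ge1$ and $0\le j<i$ there is a constant $C$ (independent of $n$ and of the sequences) such that for every $n$ and every pair of sequences $\eta,\dot\eta$ as below, $\lVert\eta\rVert^2_{i-j,i}\le Ce_{i+j-1}$, $\lVert\dot\eta\rVert^2_{i-j,i}\le Ce_{i+j}$, $\lvert\eta\rvert^2_{\infty;i-j,i}\le Ce_{i+j}$, $\lvert\dot\eta\rvert^2_{\infty;i-j,i}\le Ce_{i+j+1}$, and $\lvert\dot\eta\rvert^2_{\infty;1/2,i}\le Ce_{2i+1}$.
   Context: Fix $n$. $\eta_k,\dot\eta_k\in\mathbb{R}^d$ for $1\le k\le n+1$ with $\eta_{n+1}=\dot\eta_{n+1}=0$, extended for $k>n+1$ by $\eta_k=-\eta_{2n+2-k}$, $\dot\eta_k=-\dot\eta_{2n+2-k}$. $(\nabla_+f)_k=n(f_{k+1}-f_k)$; $s_k^{(r)}=\frac{\Gamma(k+r)}{n^r\Gamma(k)}$. Seminorms: $\lVert\eta\rVert^2_{r,m}=\frac1n\sum_{k=1}^{n-m+1}s_k^{(r)}\lvert(\nabla_+^m\eta)_k\rvert^2$, $\lvert\eta\rvert^2_{\infty;r,m}=\max_{1\le k\le n-m+1}s_k^{(r)}\lvert(\nabla_+^m\eta)_k\rvert^2$, same for $\dot\eta$. Energy: $e_m=\frac1n\sum_{\ell=0}^m\sum_{k=1}^{n-\lfloor\ell/2\rfloor}\big(s_k^{(\ell)}\lvert(\nabla_+^\ell\dot\eta)_k\rvert^2+s_k^{(\ell+1)}\lvert(\nabla_+^{\ell+1}\eta)_k\rvert^2\big)$.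 *)

theory Defs
  imports "HOL-Analysis.Analysis"
begin

text \<open>Sequences are functions nat => 'a (index 0 unused). Forward difference
  (nabla_+ f)_k = n (f_{k+1} - f_k).\<close>
definition fwd :: "nat \<Rightarrow> (nat \<Rightarrow> 'a::real_normed_vector) \<Rightarrow> nat \<Rightarrow> 'a" where
  "fwd n f = (\<lambda>k. real n *\<^sub>R (f (Suc k) - f k))"

definition fwdpow :: "nat \<Rightarrow> nat \<Rightarrow> (nat \<Rightarrow> 'a::real_normed_vector) \<Rightarrow> nat \<Rightarrow> 'a" where
  "fwdpow n m f = (fwd n ^^ m) f"

definition sw :: "nat \<Rightarrow> real \<Rightarrow> nat \<Rightarrow> real" where
  "sw n r k = Gamma (real k + r) / (real n powr r * Gamma (real k))"

text \<open>Squared seminorm ||f||^2_{r,m}; the index range 1..n-m+1 is empty when m > n.\<close>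
definition snorm2 :: "nat \<Rightarrow> real \<Rightarrow> nat \<Rightarrow> (nat \<Rightarrow> 'a::real_normed_vector) \<Rightarrow> real" where
  "snorm2 n r m f = (1 / real n) * (\<Sum>k\<in>{1..n+1-m}. sw n r k * (norm (fwdpow n m f k))\<^sup>2)"

definition supnorm2 :: "nat \<Rightarrow> real \<Rightarrow> nat \<Rightarrow> (nat \<Rightarrow> 'a::real_normed_vector) \<Rightarrow> real" where
  "supnorm2 n r m f = (if {1..n+1-m} = {} then 0
     else Max ((\<lambda>k. sw n r k * (norm (fwdpow n m f k))\<^sup>2) ` {1..n+1-m}))"

definition energy :: "nat \<Rightarrow> nat \<Rightarrow> (nat \<Rightarrow> 'a::real_normed_vector) \<Rightarrow> (nat \<Rightarrow> 'a) \<Rightarrow> real" where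
  "energy n m eta etad = (1 / real n) * (\<Sum>l\<le>m. \<Sum>k\<in>{1..n - l div 2}.
      sw n (real l) k * (norm (fwdpow n l etad k))\<^sup>2
    + sw n (real l + 1) k * (norm (fwdpow n (Suc l) eta k))\<^sup>2)"

text \<open>Admissible sequence: f_{n+1} = 0 and odd reflection f_k = - f_{2n+2-k}
  for n+1 < k <= 2n+1 (the range where the reflection is meaningful).
  Values at indices > 2n+1 are left unconstrained.\<close>
definition admissible :: "nat \<Rightarrow> (nat \<Rightarrow> 'a::real_normed_vector) \<Rightarrow> bool" where
  "admissible n f \<longleftrightarrow> f (n+1) = 0 \<and>
     (\<forall>k. n + 1 < k \<and> k \<le> 2*n + 1 \<longrightarrow> f k = - f (2*n + 2 - k))"

end

theory Submission
  imports Defs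
begin

(* Write x_k = k/n and D = nabla_+.  For integer r the weight s_k^(r) is comparable to x_k^r
   (between x_k^r and r! x_k^r), and s_k^(1/2) <= sqrt x_k.  The theorem therefore reduces to
   estimates for the polynomially weighted seminorms  P(a,m) f = (1/n) sum_k x_k^a |D^m f_k|^2
   (index range 1 <= k <= n+1-m) of a single sequence f, with the "diagonal energy"
   H(M) f = sum_{l=1..M} P(l,l) f on the right; H is dominated by the energy e_m.
   Three discrete Hardy-type facts are used, each proved for abstract real sequences first:
   (1) Hardy:  P(a,m) <= 4(m+1) P(a+1,m) + 4 P(a+2,m+1), by summation by parts against the
       cut-off F_k = x_k^(a+1) (1 - k/L), plus a variant with the weight x^(-1/2);
   (2) sup bound:  x_k^(b+1) |D^m f_k|^2 <~ P(b,m) + P(b+2,m+1), comparing a value with the mean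
       and the total variation of a weighted sequence, plus a variant with the weight x^(1/2);
   (3) iterating (1) j times:  P(m-j,m) <~ H(m+j).
   The five estimates of the theorem combine (1)-(3) with the comparison H <= e. *)

lemma sw_nat_eq:
  assumes n: "1 \<le> n" and k: "1 \<le> k"
  shows "sw n (real r) k = pochhammer (real k) r / real n ^ r"
proof -
  have "real k \<notin> \<int>\<^sub>\<le>\<^sub>0" using k by (auto simp: nonpos_Ints_def)
  then have "pochhammer (real k) r = Gamma (real k + real r) / Gamma (real k)"
    by (simp add: pochhammer_Gamma)
  moreover have "real n powr real r = real n ^ r" using n by (simp add: powr_realpow)
  ultimately show ?thesis unfolding sw_def by (simp add: field_simps)
qed

lemma pochhammer_ge_power: "1 \<le> k \<Longrightarrow> real k ^ r \<le> pochhammer (real k) r"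
proof (induction r)
  case (Suc r)
  have "real k ^ Suc r = real k ^ r * real k" by simp
  also have "\<dots> \<le> pochhammer (real k) r * (real k + real r)"
    using Suc by (intro mult_mono) (auto intro!: pochhammer_nonneg)
  also have "\<dots> = pochhammer (real k) (Suc r)" by (simp add: pochhammer_rec' mult.commute)
  finally show ?case .
qed simp

lemma pochhammer_le_fact_power: "1 \<le> k \<Longrightarrow> pochhammer (real k) r \<le> fact r * real k ^ r"
proof (induction r)
  case (Suc r)
  have "real k + real r \<le> real (Suc r) * real k"
    using Suc.prems mult_left_mono[of 1 "real k" "real r"] by (simp add: algebra_simps)
  then have "pochhammer (real k) r * (real k + real r) \<le> (fact r * real k ^ r) * (real (Suc r) * real k)"
    using Suc by (intro mult_mono) (auto intro: pochhammer_nonneg)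
  then show ?case by (simp add: pochhammer_rec' algebra_simps)
qed simp

lemma sw_nat_bounds:
  assumes "1 \<le> n" and "1 \<le> k"
  shows "(real k / real n) ^ r \<le> sw n (real r) k"
    and "sw n (real r) k \<le> fact r * (real k / real n) ^ r"
  using pochhammer_ge_power[OF assms(2), of r] pochhammer_le_fact_power[OF assms(2), of r] assms(1)
  by (auto simp: sw_nat_eq[OF assms] power_divide divide_right_mono)

lemma sw_nat_nonneg: "1 \<le> n \<Longrightarrow> 1 \<le> k \<Longrightarrow> 0 \<le> sw n (real r) k"
  using sw_nat_bounds(1)[of n k r] by (meson order_trans zero_le_divide_iff zero_le_power of_nat_0_le_iff)

(* The half-integer weight: Gamma(k+1/2) <= sqrt k Gamma(k) by log-convexity of Gamma. *)
lemma sw_half_le_sqrt: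
  assumes n: "1 \<le> n" and k: "1 \<le> k"
  shows "sw n (1/2) k \<le> sqrt (real k / real n)"
proof -
  define x where "x = real k"
  have x: "1 \<le> x" using k by (simp add: x_def)
  have "(ln \<circ> Gamma) ((1 - 1/2) *\<^sub>R x + (1/2) *\<^sub>R (x+1))
      \<le> (1 - 1/2) * (ln \<circ> Gamma) x + (1/2) * (ln \<circ> Gamma) (x+1)"
    by (rule convex_onD[OF log_convex_Gamma_real]) (use x in auto)
  moreover have "(1 - 1/2) *\<^sub>R x + (1/2) *\<^sub>R (x+1) = x + 1/2" by (simp add: field_simps)
  moreover have "Gamma (x+1) = x * Gamma x" using x by (intro Gamma_plus1) (auto simp: nonpos_Ints_def)
  ultimately have "ln (Gamma (x + 1/2)) \<le> (ln (Gamma x) + ln (x * Gamma x)) / 2" by simp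
  also have "\<dots> = ln (sqrt x * Gamma x)" using x by (simp add: ln_mult ln_sqrt)
  finally have "Gamma (x + 1/2) \<le> sqrt x * Gamma x" using x by simp
  moreover have "real n powr (1/2) = sqrt (real n)" using n by (simp add: powr_half_sqrt)
  ultimately show ?thesis unfolding sw_def x_def[symmetric] using x n
    by (simp add: field_simps real_sqrt_divide)
qed

lemma summation_by_parts:
  fixes F U :: "nat \<Rightarrow> real"
  shows "(\<Sum>k\<in>{1..Suc N}. (F k - F (k-1)) * U k)
       = F (Suc N) * U (Suc N) - F 0 * U 1 + (\<Sum>k\<in>{1..N}. F k * (U k - U (Suc k)))"
  by (induction N) (simp_all add: algebra_simps)

lemma weighted_amgm:
  fixes F d u A C D :: real
  assumes "0 < A" "F\<^sup>2 \<le> C * A * D" "0 \<le> d" "0 \<le> u" "0 \<le> F"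
  shows "F * d * u \<le> A * u\<^sup>2 / 4 + C * D * d\<^sup>2"
proof -
  have "A * (F * d * u) \<le> (A * u)\<^sup>2 / 4 + (F * d)\<^sup>2"
    using sum_squares_ge_zero[of "A*u/2 - F*d" 0] by (simp add: power2_eq_square algebra_simps)
  also have "(F * d)\<^sup>2 \<le> C * A * D * d\<^sup>2"
    using assms by (simp add: power_mult_distrib mult_right_mono)
  finally have "A * (F * d * u) \<le> A * (A * u\<^sup>2 / 4 + C * D * d\<^sup>2)"
    by (simp add: power2_eq_square algebra_simps)
  then show ?thesis using assms(1) by simp
qed

lemma weighted_diff_squares:
  fixes F d u v A A' C D :: real
  assumes "0 < A" "0 < A'" "F\<^sup>2 \<le> C * A * D" "F\<^sup>2 \<le> C * A' * D"
    and "0 \<le> d" "0 \<le> u" "0 \<le> v" "0 \<le> F" "\<bar>v - u\<bar> \<le> d"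
  shows "F * (u\<^sup>2 - v\<^sup>2) \<le> A * u\<^sup>2 / 4 + A' * v\<^sup>2 / 4 + 2 * C * D * d\<^sup>2"
proof -
  have "u\<^sup>2 - v\<^sup>2 = (u - v) * (u + v)" by (simp add: power2_eq_square algebra_simps)
  also have "\<dots> \<le> d * (u + v)" using assms by (intro mult_right_mono) auto
  finally have "F * (u\<^sup>2 - v\<^sup>2) \<le> F * d * u + F * d * v"
    using assms(8) by (metis distrib_left mult.assoc mult_left_mono)
  also have "\<dots> \<le> (A * u\<^sup>2 / 4 + C * D * d\<^sup>2) + (A' * v\<^sup>2 / 4 + C * D * d\<^sup>2)"
    using weighted_amgm[of A F C D d u] weighted_amgm[of A' F C D d v] assms by (intro add_mono) auto
  finally show ?thesis by simp
qed

lemma sum_drop_end_le: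
  fixes g :: "nat \<Rightarrow> real"
  assumes "\<And>k. 1 \<le> k \<Longrightarrow> k \<le> Suc N \<Longrightarrow> 0 \<le> g k"
  shows "(\<Sum>k\<in>{1..N}. g k) \<le> (\<Sum>k\<in>{1..Suc N}. g k)"
    and "(\<Sum>k\<in>{1..N}. g (Suc k)) \<le> (\<Sum>k\<in>{1..Suc N}. g k)"
proof -
  show "(\<Sum>k\<in>{1..N}. g k) \<le> (\<Sum>k\<in>{1..Suc N}. g k)"
    by (intro sum_mono2) (auto intro: assms)
  have "(\<Sum>k\<in>{1..N}. g (Suc k)) = (\<Sum>k\<in>{2..Suc N}. g k)"
    using sum.shift_bounds_cl_Suc_ivl[of g 1 N] by (simp add: numeral_2_eq_2)
  also have "\<dots> \<le> (\<Sum>k\<in>{1..Suc N}. g k)"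
    by (intro sum_mono2) (auto intro: assms)
  finally show "(\<Sum>k\<in>{1..N}. g (Suc k)) \<le> (\<Sum>k\<in>{1..Suc N}. g k)" .
qed

lemma le_combination:
  fixes X P Q S a b c d :: real
  assumes "X \<le> a * P + b * Q" "P \<le> c * S" "Q \<le> d * S" "0 \<le> a" "0 \<le> b"
  shows "X \<le> (a * c + b * d) * S"
proof -
  have "a * P \<le> a * (c * S)" "b * Q \<le> b * (d * S)" using assms by (simp_all add: mult_left_mono)
  then show ?thesis using assms(1) by (simp add: algebra_simps)
qed

lemma le_scaled_bound:
  fixes X K C S e :: real
  assumes "X \<le> K * S" "0 \<le> K" "K \<le> C" "0 \<le> S" "S \<le> e"
  shows "X \<le> C * e"
  using assms by (meson mult_mono order_trans)

(* Summation by parts against a cut-off F that is nonnegative at 0 and nonpositive at L;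
   the boundary terms have a favourable sign. *)
lemma sum_by_parts_cutoff:
  fixes F U :: "nat \<Rightarrow> real"
  assumes "1 \<le> L" "0 \<le> F 0" "F L \<le> 0" "\<And>k. 0 \<le> U k"
  shows "(\<Sum>k\<in>{1..L}. (F k - F (k-1)) * U k) \<le> (\<Sum>k\<in>{1..L-1}. F k * (U k - U (Suc k)))"
proof -
  obtain N where N: "L = Suc N" using assms(1) by (cases L) auto
  have "F L * U L \<le> 0" "0 \<le> F 0 * U 1" using assms by (auto simp: mult_nonpos_nonneg)
  then show ?thesis unfolding N using summation_by_parts[of F U N] by simp
qed

lemma discrete_hardy:
  fixes u d A B D F :: "nat \<Rightarrow> real" and K C :: real
  assumes L: "1 \<le> L"
    and ud: "\<And>k. 1 \<le> k \<Longrightarrow> k < L \<Longrightarrow> \<bar>u (Suc k) - u k\<bar> \<le> d k"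
    and u0: "\<And>k. 0 \<le> u k" and d0: "\<And>k. 0 \<le> d k"
    and F0: "0 \<le> F 0" and FL: "F L \<le> 0"
    and Fdiff: "\<And>k. 1 \<le> k \<Longrightarrow> k \<le> L \<Longrightarrow> A k - K * B k \<le> F k - F (k-1)"
    and Apos: "\<And>k. 1 \<le> k \<Longrightarrow> k \<le> L \<Longrightarrow> 0 < A k"
    and Fbound: "\<And>k. 1 \<le> k \<Longrightarrow> k < L \<Longrightarrow>
                   0 \<le> F k \<and> (F k)\<^sup>2 \<le> C * A k * D k \<and> (F k)\<^sup>2 \<le> C * A (Suc k) * D k"
  shows "(\<Sum>k\<in>{1..L}. A k * (u k)\<^sup>2)
       \<le> 2 * K * (\<Sum>k\<in>{1..L}. B k * (u k)\<^sup>2) + 4 * C * (\<Sum>k\<in>{1..L-1}. D k * (d k)\<^sup>2)"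
proof -
  obtain N where N: "L = Suc N" using L by (cases L) auto
  let ?U = "\<lambda>k. (u k)\<^sup>2"
  let ?SA = "\<Sum>k\<in>{1..L}. A k * ?U k"
  have "?SA - K * (\<Sum>k\<in>{1..L}. B k * ?U k) = (\<Sum>k\<in>{1..L}. (A k - K * B k) * ?U k)"
    by (simp add: sum_distrib_left sum_subtractf algebra_simps)
  also have "\<dots> \<le> (\<Sum>k\<in>{1..L}. (F k - F (k-1)) * ?U k)"
    using Fdiff by (intro sum_mono mult_right_mono) auto
  also have "\<dots> \<le> (\<Sum>k\<in>{1..N}. F k * (?U k - ?U (Suc k)))"
    using sum_by_parts_cutoff[OF L F0 FL, of ?U] N by simp
  also have "\<dots> \<le> (\<Sum>k\<in>{1..N}. A k * ?U k / 4 + A (Suc k) * ?U (Suc k) / 4 + 2 * C * D k * (d k)\<^sup>2)"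
  proof (intro sum_mono)
    fix k assume "k \<in> {1..N}"
    then have "1 \<le> k" "k < L" using N by auto
    then show "F k * (?U k - ?U (Suc k)) \<le> A k * ?U k / 4 + A (Suc k) * ?U (Suc k) / 4 + 2 * C * D k * (d k)\<^sup>2"
      using Fbound Apos[of k] Apos[of "Suc k"] ud u0 d0 by (intro weighted_diff_squares) auto
  qed
  also have "\<dots> = (\<Sum>k\<in>{1..N}. A k * ?U k) / 4 + (\<Sum>k\<in>{1..N}. A (Suc k) * ?U (Suc k)) / 4
                  + 2 * C * (\<Sum>k\<in>{1..N}. D k * (d k)\<^sup>2)"
    by (simp add: sum.distrib sum_divide_distrib sum_distrib_left algebra_simps)
  also have "\<dots> \<le> ?SA / 4 + ?SA / 4 + 2 * C * (\<Sum>k\<in>{1..N}. D k * (d k)\<^sup>2)"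
  proof -
    have "0 \<le> A k * ?U k" if "1 \<le> k" "k \<le> Suc N" for k
      using Apos[of k] that N by simp
    from sum_drop_end_le[of N "\<lambda>k. A k * ?U k", OF this]
    have "(\<Sum>k\<in>{1..N}. A k * ?U k) \<le> ?SA" "(\<Sum>k\<in>{1..N}. A (Suc k) * ?U (Suc k)) \<le> ?SA"
      unfolding N by simp_all
    then show ?thesis by simp
  qed
  finally have "?SA \<le> 2 * K * (\<Sum>k\<in>{1..L}. B k * ?U k) + 4 * C * (\<Sum>k\<in>{1..N}. D k * (d k)\<^sup>2)"
    by (simp add: algebra_simps)
  then show ?thesis using N by simp
qed

lemma abs_diff_le_variation:
  fixes V :: "nat \<Rightarrow> real"
  assumes "k \<le> p"
  shows "\<bar>V p - V k\<bar> \<le> (\<Sum>l\<in>{k..<p}. \<bar>V (Suc l) - V l\<bar>)"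
  using assms
proof (induction p)
  case (Suc p)
  show ?case
  proof (cases "k = Suc p")
    case False
    then have kp: "k \<le> p" using Suc.prems by simp
    have "\<bar>V (Suc p) - V k\<bar> \<le> \<bar>V (Suc p) - V p\<bar> + \<bar>V p - V k\<bar>" by simp
    also have "\<dots> \<le> \<bar>V (Suc p) - V p\<bar> + (\<Sum>l\<in>{k..<p}. \<bar>V (Suc l) - V l\<bar>)"
      using Suc.IH[OF kp] by simp
    finally show ?thesis using kp by simp
  qed simp
qed simp

lemma le_mean_plus_variation:
  fixes V :: "nat \<Rightarrow> real"
  assumes L: "1 \<le> L" and k: "1 \<le> k" "k \<le> L"
  shows "V k \<le> (\<Sum>p\<in>{1..L}. V p) / real L + (\<Sum>l\<in>{1..L-1}. \<bar>V (Suc l) - V l\<bar>)"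
proof -
  let ?T = "\<Sum>l\<in>{1..L-1}. \<bar>V (Suc l) - V l\<bar>"
  have close: "V k \<le> V p + ?T" if p: "1 \<le> p" "p \<le> L" for p
  proof -
    have "\<bar>V (max k p) - V (min k p)\<bar> \<le> (\<Sum>l\<in>{min k p..<max k p}. \<bar>V (Suc l) - V l\<bar>)"
      by (rule abs_diff_le_variation) simp
    also have "\<dots> \<le> ?T" using k p by (intro sum_mono2) auto
    finally show ?thesis by (cases "k \<le> p") (auto simp: max_def min_def)
  qed
  have "(\<Sum>p\<in>{1..L}. V k) \<le> (\<Sum>p\<in>{1..L}. V p + ?T)" by (intro sum_mono close) auto
  then have "real L * V k \<le> (\<Sum>p\<in>{1..L}. V p) + real L * ?T" by (simp add: sum.distrib)
  then show ?thesis using L by (simp add: field_simps)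
qed

lemma weighted_square_variation:
  fixes u u' d W W' G G' E C :: real
  assumes ud: "\<bar>u' - u\<bar> \<le> d" and pos: "0 \<le> u" "0 \<le> u'" "0 \<le> d" "0 < G" "0 < G'" "0 \<le> W"
    and W: "W\<^sup>2 \<le> C * G * E" "W\<^sup>2 \<le> C * G' * E" "\<bar>W' - W\<bar> \<le> C * G'"
  shows "\<bar>W' * u'\<^sup>2 - W * u\<^sup>2\<bar> \<le> (C + 1) * (G' * u'\<^sup>2) + G * u\<^sup>2 + 2 * C * (E * d\<^sup>2)"
proof -
  have "u'\<^sup>2 - u\<^sup>2 = (u' - u) * (u + u')" by (simp add: power2_eq_square algebra_simps)
  then have "\<bar>u'\<^sup>2 - u\<^sup>2\<bar> = \<bar>u' - u\<bar> * (u + u')" using pos by (simp add: abs_mult)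
  also have "\<dots> \<le> d * (u + u')" using ud pos by (intro mult_right_mono) auto
  finally have "W * \<bar>u'\<^sup>2 - u\<^sup>2\<bar> \<le> W * (d * (u + u'))" using pos(6) by (rule mult_left_mono)
  then have sq: "W * \<bar>u'\<^sup>2 - u\<^sup>2\<bar> \<le> W * d * u + W * d * u'" by (simp add: algebra_simps)
  have "\<bar>W' * u'\<^sup>2 - W * u\<^sup>2\<bar> = \<bar>(W' - W) * u'\<^sup>2 + W * (u'\<^sup>2 - u\<^sup>2)\<bar>"
    by (simp add: algebra_simps)
  also have "\<dots> \<le> \<bar>W' - W\<bar> * u'\<^sup>2 + W * \<bar>u'\<^sup>2 - u\<^sup>2\<bar>"
    using pos(6) by (metis abs_triangle_ineq abs_mult abs_of_nonneg zero_le_power2)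
  also have "\<dots> \<le> C * G' * u'\<^sup>2 + ((G * u\<^sup>2 / 4 + C * E * d\<^sup>2) + (G' * u'\<^sup>2 / 4 + C * E * d\<^sup>2))"
  proof (rule add_mono)
    show "\<bar>W' - W\<bar> * u'\<^sup>2 \<le> C * G' * u'\<^sup>2" using W(3) by (rule mult_right_mono) simp
    show "W * \<bar>u'\<^sup>2 - u\<^sup>2\<bar> \<le> (G * u\<^sup>2 / 4 + C * E * d\<^sup>2) + (G' * u'\<^sup>2 / 4 + C * E * d\<^sup>2)"
      using sq weighted_amgm[OF pos(4) W(1) pos(3) pos(1) pos(6)]
        weighted_amgm[OF pos(5) W(2) pos(3) pos(2) pos(6)] by linarith
  qed
  also have "\<dots> \<le> (C + 1) * (G' * u'\<^sup>2) + G * u\<^sup>2 + 2 * C * (E * d\<^sup>2)"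
  proof -
    have "0 \<le> G * u\<^sup>2" "0 \<le> G' * u'\<^sup>2" using pos(4,5) by simp_all
    then show ?thesis by (simp add: algebra_simps)
  qed
  finally show ?thesis .
qed

lemma discrete_sup_bound:
  fixes u d W G E :: "nat \<Rightarrow> real" and C :: real
  assumes L: "1 \<le> L" and k: "1 \<le> k" "k \<le> L"
    and ud: "\<And>l. 1 \<le> l \<Longrightarrow> l < L \<Longrightarrow> \<bar>u (Suc l) - u l\<bar> \<le> d l"
    and u0: "\<And>l. 0 \<le> u l" and d0: "\<And>l. 0 \<le> d l" and C0: "0 \<le> C"
    and Gpos: "\<And>l. 1 \<le> l \<Longrightarrow> l \<le> L \<Longrightarrow> 0 < G l"
    and W0: "\<And>l. 0 \<le> W l"
    and Wbound: "\<And>l. 1 \<le> l \<Longrightarrow> l < L \<Longrightarrow> (W l)\<^sup>2 \<le> C * G l * E l \<and> (W l)\<^sup>2 \<le> C * G (Suc l) * E l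
                  \<and> \<bar>W (Suc l) - W l\<bar> \<le> C * G (Suc l)"
  shows "W k * (u k)\<^sup>2 \<le> (\<Sum>l\<in>{1..L}. W l * (u l)\<^sup>2) / real L
          + (C + 2) * (\<Sum>l\<in>{1..L}. G l * (u l)\<^sup>2) + 2 * C * (\<Sum>l\<in>{1..L-1}. E l * (d l)\<^sup>2)"
proof -
  obtain N where N: "L = Suc N" using L by (cases L) auto
  let ?V = "\<lambda>l. W l * (u l)\<^sup>2"
  let ?SG = "\<Sum>l\<in>{1..L}. G l * (u l)\<^sup>2"
  let ?SE = "\<Sum>l\<in>{1..N}. E l * (d l)\<^sup>2"
  have "?V k \<le> (\<Sum>l\<in>{1..L}. ?V l) / real L + (\<Sum>l\<in>{1..L-1}. \<bar>?V (Suc l) - ?V l\<bar>)"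
    by (rule le_mean_plus_variation[OF L k])
  also have "(\<Sum>l\<in>{1..L-1}. \<bar>?V (Suc l) - ?V l\<bar>)
      \<le> (\<Sum>l\<in>{1..N}. (C + 1) * (G (Suc l) * (u (Suc l))\<^sup>2) + G l * (u l)\<^sup>2 + 2 * C * (E l * (d l)\<^sup>2))"
  proof -
    have "\<bar>?V (Suc l) - ?V l\<bar> \<le> (C + 1) * (G (Suc l) * (u (Suc l))\<^sup>2) + G l * (u l)\<^sup>2 + 2 * C * (E l * (d l)\<^sup>2)"
      if "l \<in> {1..N}" for l
      using that N ud u0 d0 Gpos W0 Wbound by (intro weighted_square_variation) auto
    then show ?thesis unfolding N diff_Suc_1 by (intro sum_mono)
  qed
  also have "\<dots> = (C + 1) * (\<Sum>l\<in>{1..N}. G (Suc l) * (u (Suc l))\<^sup>2) + (\<Sum>l\<in>{1..N}. G l * (u l)\<^sup>2) + 2 * C * ?SE"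
    by (simp add: sum.distrib sum_distrib_left)
  also have "\<dots> \<le> (C + 1) * ?SG + ?SG + 2 * C * ?SE"
  proof -
    have "0 \<le> G l * (u l)\<^sup>2" if "1 \<le> l" "l \<le> Suc N" for l
      using Gpos[of l] that N by simp
    then show ?thesis using sum_drop_end_le[of N "\<lambda>l. G l * (u l)\<^sup>2"] C0 unfolding N
      by (intro add_mono mult_left_mono) auto
  qed
  finally show ?thesis using N by (simp add: algebra_simps)
qed

definition wnorm2 :: "nat \<Rightarrow> (real \<Rightarrow> real) \<Rightarrow> nat \<Rightarrow> (nat \<Rightarrow> 'a::real_normed_vector) \<Rightarrow> real" where
  "wnorm2 n w m f = (\<Sum>k\<in>{1..n+1-m}. w (real k / real n) / real n * (norm (fwdpow n m f k))\<^sup>2)"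

abbreviation pnorm2 :: "nat \<Rightarrow> nat \<Rightarrow> nat \<Rightarrow> (nat \<Rightarrow> 'a::real_normed_vector) \<Rightarrow> real" where
  "pnorm2 n a \<equiv> wnorm2 n (\<lambda>x. x ^ a)"

abbreviation hnorm2 :: "nat \<Rightarrow> nat \<Rightarrow> (nat \<Rightarrow> 'a::real_normed_vector) \<Rightarrow> real" where
  "hnorm2 n \<equiv> wnorm2 n (\<lambda>x. 1 / sqrt x)"

lemma wnorm2_nonneg: "(\<And>x. 0 \<le> x \<Longrightarrow> 0 \<le> w x) \<Longrightarrow> 0 \<le> wnorm2 n w m f"
  unfolding wnorm2_def by (intro sum_nonneg mult_nonneg_nonneg divide_nonneg_nonneg) auto

lemma pnorm2_nonneg: "0 \<le> pnorm2 n a m f"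
  by (rule wnorm2_nonneg) simp

lemma hnorm2_nonneg: "0 \<le> hnorm2 n m f"
  by (rule wnorm2_nonneg) simp

lemma wnorm2_dominates:
  assumes "\<And>k. 1 \<le> k \<Longrightarrow> k \<le> n + 1 - m \<Longrightarrow> v k \<le> c * (w (real k / real n) / real n)"
  shows "(\<Sum>k\<in>{1..n+1-m}. v k * (norm (fwdpow n m f k))\<^sup>2) \<le> c * wnorm2 n w m f"
  unfolding wnorm2_def sum_distrib_left mult.assoc[symmetric]
  using assms by (intro sum_mono mult_right_mono) auto

lemma wnorm2_dominated:
  assumes "\<And>k. 1 \<le> k \<Longrightarrow> k \<le> n + 1 - m \<Longrightarrow> c * (w (real k / real n) / real n) \<le> v k"
  shows "c * wnorm2 n w m f \<le> (\<Sum>k\<in>{1..n+1-m}. v k * (norm (fwdpow n m f k))\<^sup>2)"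
  unfolding wnorm2_def sum_distrib_left mult.assoc[symmetric]
  using assms by (intro sum_mono mult_right_mono) auto

(* The same for the next difference, whose index range is 1..n-m, with the increments
   |D^(m+1) f_k| / n that appear in the abstract lemmas. *)
lemma wnorm2_dominates_next:
  assumes n: "1 \<le> n"
    and v: "\<And>k. 1 \<le> k \<Longrightarrow> k \<le> n - m \<Longrightarrow> v k \<le> c * (real n * w (real k / real n))"
  shows "(\<Sum>k\<in>{1..n-m}. v k * (norm (fwdpow n (Suc m) f k) / real n)\<^sup>2) \<le> c * wnorm2 n w (Suc m) f"
proof -
  have "(\<Sum>k\<in>{1..n-m}. v k * (norm (fwdpow n (Suc m) f k) / real n)\<^sup>2)
      = (\<Sum>k\<in>{1..n+1-Suc m}. v k / (real n)\<^sup>2 * (norm (fwdpow n (Suc m) f k))\<^sup>2)"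
    by (simp add: power_divide)
  also have "\<dots> \<le> c * wnorm2 n w (Suc m) f"
  proof (rule wnorm2_dominates)
    fix k assume "1 \<le> k" "k \<le> n + 1 - Suc m"
    then have "v k / (real n)\<^sup>2 \<le> c * (real n * w (real k / real n)) / (real n)\<^sup>2"
      using v by (intro divide_right_mono) auto
    then show "v k / (real n)\<^sup>2 \<le> c * (w (real k / real n) / real n)"
      using n by (simp add: power2_eq_square)
  qed
  finally show ?thesis .
qed

lemma fwdpow_Suc: "fwdpow n (Suc m) f k = real n *\<^sub>R (fwdpow n m f (Suc k) - fwdpow n m f k)"
  by (simp add: fwdpow_def fwd_def)

lemma norm_fwdpow_step:
  assumes "1 \<le> n"
  shows "\<bar>norm (fwdpow n m f (Suc k)) - norm (fwdpow n m f k)\<bar> \<le> norm (fwdpow n (Suc m) f k) / real n"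
proof -
  have "norm (fwdpow n (Suc m) f k) / real n = norm (fwdpow n m f (Suc k) - fwdpow n m f k)"
    using assms by (simp add: fwdpow_Suc)
  then show ?thesis by (simp add: norm_triangle_ineq3)
qed

lemma index_ratio_le_2:
  assumes "1 \<le> n" "k \<le> n + 1 - m"
  shows "real k / real n \<le> 2"
  using assms by (simp add: field_simps)

lemma sqrt_index_ratio_le_2:
  assumes "1 \<le> n" "k \<le> n + 1 - m"
  shows "sqrt (real k / real n) \<le> 2"
  using real_sqrt_le_mono[of "real k / real n" 4] index_ratio_le_2[OF assms] by simp

lemma range_length_bound:
  assumes "1 \<le> n + 1 - m"
  shows "real n \<le> real (m + 1) * real (n + 1 - m)"
proof -
  have "n \<le> (m + 1) * (n + 1 - m)"
    using assms by (cases "n + 1 - m") (auto simp: algebra_simps)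
  then show ?thesis by (metis of_nat_le_iff of_nat_mult)
qed

lemma mean_le_of_total_le:
  fixes S X M :: real
  assumes "S \<le> 2 * real n * X" "0 \<le> X" "real n \<le> M * real L" "1 \<le> L"
  shows "S / real L \<le> 2 * M * X"
proof -
  have "2 * real n * X \<le> 2 * (M * real L) * X"
    using assms(2,3) by (intro mult_right_mono mult_left_mono) auto
  with assms(1) have "S \<le> (2 * M * X) * real L" by (simp add: algebra_simps)
  then show ?thesis using assms(4) by (simp add: divide_le_eq)
qed

lemma pow_cutoff_diff:
  fixes a :: nat and n L k M :: real
  assumes n: "0 < n" and k: "1 \<le> k" "k \<le> L" and nM: "n \<le> M * L"
  shows "(k/n)^a/n - 2*M*((k/n)^(a+1)/n) \<le> (k/n)^(a+1)*(1-k/L) - ((k-1)/n)^(a+1)*(1-(k-1)/L)"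
proof -
  define x where "x = k/n"
  define y where "y = (k-1)/n"
  define P where "P = x^a"
  have L0: "0 < L" using k by simp
  have y0: "0 \<le> y" "y \<le> x" using k n by (auto simp: x_def y_def divide_right_mono)
  have P0: "0 \<le> P" using y0 by (simp add: P_def)
  have "y^(a+1) \<le> y * P" unfolding P_def using y0 by (simp add: mult_left_mono power_mono)
  then have "y^(a+1) * (1-(k-1)/L) \<le> y * P * (1-(k-1)/L)"
    using k L0 by (intro mult_right_mono) (auto simp: field_simps)
  moreover have "x * P * (1-k/L) - y * P * (1-(k-1)/L) = P * (1/n - (k/n + y)/L)"
    using n L0 by (simp add: x_def y_def field_simps)
  moreover have "1/n - 2*M*x/n \<le> 1/n - (k/n + y)/L"
  proof -
    have "k/n + y \<le> 2*x" using y0 by (simp add: x_def)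
    then have "(k/n + y)/L \<le> 2*x/L" using L0 by (simp add: divide_right_mono)
    also have "2*x*n \<le> 2*x*(M*L)" using nM y0 by (intro mult_left_mono) auto
    then have "2*x/L \<le> 2*M*x/n" using n L0 by (simp add: field_simps)
    finally show ?thesis by simp
  qed
  then have "P * (1/n - 2*M*x/n) \<le> P * (1/n - (k/n + y)/L)" using P0 by (rule mult_left_mono)
  ultimately have "P * (1/n - 2*M*x/n) \<le> x * P * (1-k/L) - y^(a+1) * (1-(k-1)/L)" by linarith
  then show ?thesis using n by (simp add: P_def x_def y_def field_simps)
qed

lemma pow_cutoff_bound:
  fixes x y t n :: real
  assumes "0 \<le> x" "x \<le> y" "0 \<le> t" "t \<le> 1" "0 < n" "1 \<le> c"
  shows "(x^(a+1) * t)\<^sup>2 \<le> c * (y^a / n) * (n * x^(a+2))"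
proof -
  have "(x^(a+1) * t)\<^sup>2 \<le> (x^(a+1))\<^sup>2"
    using assms by (intro power_mono) (auto intro: mult_left_le)
  also have "\<dots> = x^a / n * (n * x^(a+2))" using assms(5) by (simp add: power2_eq_square power_add)
  also have "\<dots> \<le> y^a / n * (n * x^(a+2))"
    using assms by (intro mult_right_mono divide_right_mono power_mono) auto
  also have "\<dots> \<le> c * (y^a / n) * (n * x^(a+2))"
    using assms mult_right_mono[OF assms(6), of "y^a / n * (n * x^(a+2))"] by simp
  finally show ?thesis .
qed

lemma hardy_pow:
  assumes n: "1 \<le> n"
  shows "pnorm2 n a m f \<le> 4 * real (m+1) * pnorm2 n (a+1) m f + 4 * pnorm2 n (a+2) (Suc m) f"
proof (cases "1 \<le> n + 1 - m")
  case False
  then have "pnorm2 n a m f = 0" by (simp add: wnorm2_def)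
  then show ?thesis using pnorm2_nonneg[of n "a+1" m f] pnorm2_nonneg[of n "a+2" "Suc m" f] by simp
next
  case True
  define L where "L = n + 1 - m"
  define u where "u k = norm (fwdpow n m f k)" for k
  define d where "d k = norm (fwdpow n (Suc m) f k) / real n" for k
  define A where "A k = (real k / real n)^a / real n" for k
  define B where "B k = (real k / real n)^(a+1) / real n" for k
  define D where "D k = real n * (real k / real n)^(a+2)" for k
  define F where "F k = (real k / real n)^(a+1) * (1 - real k / real L)" for k
  define M where "M = real (m+1)"
  have L1: "1 \<le> L" and n0: "0 < real n" using True n by (simp_all add: L_def)
  have nM: "real n \<le> M * real L" using range_length_bound[OF True] by (simp add: M_def L_def)
  have hardy: "(\<Sum>k\<in>{1..L}. A k * (u k)\<^sup>2)
      \<le> 2 * (2*M) * (\<Sum>k\<in>{1..L}. B k * (u k)\<^sup>2) + 4 * 1 * (\<Sum>k\<in>{1..L-1}. D k * (d k)\<^sup>2)"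
  proof (rule discrete_hardy[OF L1])
    show "\<bar>u (Suc k) - u k\<bar> \<le> d k" for k unfolding u_def d_def using norm_fwdpow_step[OF n] .
    show "A k - 2*M * B k \<le> F k - F (k-1)" if "1 \<le> k" "k \<le> L" for k
      unfolding A_def B_def F_def using that n0 nM pow_cutoff_diff[of "real n" "real k" "real L" M a]
      by (simp add: of_nat_diff)
    show "0 \<le> F k \<and> (F k)\<^sup>2 \<le> 1 * A k * D k \<and> (F k)\<^sup>2 \<le> 1 * A (Suc k) * D k" if "1 \<le> k" "k < L" for k
    proof -
      have "0 \<le> 1 - real k / real L" "1 - real k / real L \<le> 1" using that by auto
      moreover have "real k / real n \<le> real (Suc k) / real n" using n0 by (simp add: divide_right_mono)
      ultimately show ?thesis unfolding F_def A_def D_def using n0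
        pow_cutoff_bound[of "real k / real n" "real k / real n" "1 - real k / real L" "real n" 1 a]
        pow_cutoff_bound[of "real k / real n" "real (Suc k) / real n" "1 - real k / real L" "real n" 1 a]
        by simp
    qed
  qed (use L1 n0 in \<open>auto simp: u_def d_def F_def A_def\<close>)
  have "(\<Sum>k\<in>{1..L}. A k * (u k)\<^sup>2) = pnorm2 n a m f"
    by (simp add: wnorm2_def L_def A_def u_def)
  moreover have "2 * (2*M) * (\<Sum>k\<in>{1..L}. B k * (u k)\<^sup>2) \<le> 2 * (2*M) * (1 * pnorm2 n (a+1) m f)"
    unfolding L_def B_def u_def by (intro mult_left_mono wnorm2_dominates) (simp_all add: M_def)
  moreover have "(\<Sum>k\<in>{1..L-1}. D k * (d k)\<^sup>2) \<le> 1 * pnorm2 n (a+2) (Suc m) f"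
  proof -
    have "L - 1 = n - m" by (simp add: L_def)
    then show ?thesis unfolding D_def d_def by (simp only:) (rule wnorm2_dominates_next[OF n], simp)
  qed
  ultimately show ?thesis using hardy unfolding M_def by linarith
qed

lemma half_cutoff_diff:
  fixes n L k M :: real
  assumes n: "0 < n" and k: "1 \<le> k" "k \<le> L" and nM: "n \<le> M * L"
  shows "1/sqrt(k/n)/n - 3*M*(sqrt(k/n)/n) \<le> 2* sqrt(k/n)*(1-k/L) - 2* sqrt((k-1)/n)*(1-(k-1)/L)"
proof -
  define s where "s = sqrt (k/n)"
  define t where "t = sqrt ((k-1)/n)"
  have L0: "0 < L" using k by simp
  have s0: "0 < s" and t0: "0 \<le> t" using n k by (simp_all add: s_def t_def)
  have ss: "s^2 = k/n" and tt: "t^2 = (k-1)/n" using n k by (simp_all add: s_def t_def)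
  have ts: "t \<le> s" unfolding s_def t_def using n by (intro real_sqrt_le_mono divide_right_mono) auto
  have "s^2 - t^2 = 1/n" using ss tt n by (simp add: field_simps)
  then have "1/n \<le> 2*(s-t)* s"
    using sum_squares_ge_zero[of "s-t" 0] by (simp add: power2_eq_square algebra_simps)
  then have a: "1/s/n \<le> 2*(s-t)" using s0 n by (simp add: field_simps)
  have c1: "0 \<le> 1 - k/L" using k L0 by simp
  have "1/s/n*(k/L) = s/L" using ss s0 n L0 by (simp add: power2_eq_square field_simps)
  moreover have "s/L \<le> M*(s/n)"
  proof -
    have "s*n \<le> s*(M*L)" using nM s0 by (intro mult_left_mono) auto
    then show ?thesis using n L0 by (simp add: field_simps)
  qed
  moreover have "t/L \<le> s/L" using ts L0 by (simp add: divide_right_mono)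
  moreover have "1/s/n*(1-k/L) \<le> 2*(s-t)*(1-k/L)" using a c1 by (rule mult_right_mono)
  moreover have "2* s*(1-k/L) - 2*t*(1-(k-1)/L) = 2*(s-t)*(1-k/L) - 2*(t/L)"
    using L0 by (simp add: field_simps)
  moreover have "1/s/n*(1-k/L) = 1/s/n - 1/s/n*(k/L)" by (simp only: right_diff_distrib mult_1_right)
  ultimately have "1/s/n - 3*M*(s/n) \<le> 2* s*(1-k/L) - 2*t*(1-(k-1)/L)"
    by linarith
  then show ?thesis by (simp add: s_def t_def)
qed

lemma half_cutoff_bound:
  fixes x y t n :: real
  assumes "0 < x" "x \<le> y" "y \<le> 4 * x" "0 \<le> t" "t \<le> 1" "0 < n"
  shows "(2 * sqrt x * t)\<^sup>2 \<le> 8 * (1 / sqrt y / n) * (n * x * sqrt x)"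
proof -
  have "(2 * sqrt x * t)\<^sup>2 \<le> (2 * sqrt x)\<^sup>2"
    using assms by (intro power_mono) (auto intro: mult_left_le)
  also have "\<dots> = 4 * x" using assms by (simp add: power_mult_distrib)
  also have "\<dots> \<le> 8 * (1 / sqrt y / n) * (n * x * sqrt x)"
  proof -
    have "sqrt y \<le> sqrt 4 * sqrt x" using real_sqrt_le_mono[OF assms(3)] by (simp add: real_sqrt_mult)
    then have "4 * x * sqrt y \<le> 4 * x * (2 * sqrt x)" using assms by (intro mult_left_mono) auto
    moreover have "0 < sqrt y" using assms by simp
    ultimately show ?thesis using assms by (simp add: field_simps)
  qed
  finally show ?thesis .
qed

lemma half_next_level:
  assumes n: "1 \<le> n"
  shows "(\<Sum>k\<in>{1..n-m}. (real n * (real k / real n) * sqrt (real k / real n))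
            * (norm (fwdpow n (Suc m) f k) / real n)\<^sup>2) \<le> 2 * pnorm2 n 1 (Suc m) f"
proof (rule wnorm2_dominates_next[OF n])
  fix k assume "1 \<le> k" "k \<le> n - m"
  then have "real k * sqrt (real k / real n) \<le> real k * 2"
    using sqrt_index_ratio_le_2[OF n, of k m] by (intro mult_left_mono) auto
  then show "real n * (real k / real n) * sqrt (real k / real n) \<le> 2 * (real n * (real k / real n) ^ 1)"
    using n by simp
qed

lemma hardy_half:
  assumes n: "1 \<le> n"
  shows "hnorm2 n m f \<le> 12 * real (m+1) * pnorm2 n 0 m f + 64 * pnorm2 n 1 (Suc m) f"
proof (cases "1 \<le> n + 1 - m")
  case False
  then have "hnorm2 n m f = 0" by (simp add: wnorm2_def)
  then show ?thesis using pnorm2_nonneg[of n 0 m f] pnorm2_nonneg[of n 1 "Suc m" f] by simp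
next
  case True
  define L where "L = n + 1 - m"
  define u where "u k = norm (fwdpow n m f k)" for k
  define d where "d k = norm (fwdpow n (Suc m) f k) / real n" for k
  define A where "A k = 1 / sqrt (real k / real n) / real n" for k
  define B where "B k = sqrt (real k / real n) / real n" for k
  define D where "D k = real n * (real k / real n) * sqrt (real k / real n)" for k
  define F where "F k = 2 * sqrt (real k / real n) * (1 - real k / real L)" for k
  define M where "M = real (m+1)"
  have L1: "1 \<le> L" and n0: "0 < real n" using True n by (simp_all add: L_def)
  have nM: "real n \<le> M * real L" using range_length_bound[OF True] by (simp add: M_def L_def)
  have hardy: "(\<Sum>k\<in>{1..L}. A k * (u k)\<^sup>2)
      \<le> 2 * (3*M) * (\<Sum>k\<in>{1..L}. B k * (u k)\<^sup>2) + 4 * 8 * (\<Sum>k\<in>{1..L-1}. D k * (d k)\<^sup>2)"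
  proof (rule discrete_hardy[OF L1])
    show "\<bar>u (Suc k) - u k\<bar> \<le> d k" for k unfolding u_def d_def using norm_fwdpow_step[OF n] .
    show "A k - 3*M * B k \<le> F k - F (k-1)" if "1 \<le> k" "k \<le> L" for k
      unfolding A_def B_def F_def using that n0 nM half_cutoff_diff[of "real n" "real k" "real L" M]
      by (simp add: of_nat_diff)
    show "0 \<le> F k \<and> (F k)\<^sup>2 \<le> 8 * A k * D k \<and> (F k)\<^sup>2 \<le> 8 * A (Suc k) * D k" if "1 \<le> k" "k < L" for k
    proof -
      have "0 \<le> 1 - real k / real L" "1 - real k / real L \<le> 1" using that by auto
      moreover have "real k / real n \<le> real (Suc k) / real n" "real (Suc k) / real n \<le> 4 * (real k / real n)"
        using n0 that by (simp_all add: divide_right_mono field_simps)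
      ultimately show ?thesis unfolding F_def A_def D_def using n0 that
        half_cutoff_bound[of "real k / real n" "real k / real n" "1 - real k / real L" "real n"]
        half_cutoff_bound[of "real k / real n" "real (Suc k) / real n" "1 - real k / real L" "real n"]
        by simp
    qed
  qed (use L1 n0 in \<open>auto simp: u_def d_def F_def A_def\<close>)
  have "(\<Sum>k\<in>{1..L}. A k * (u k)\<^sup>2) = hnorm2 n m f"
    by (simp add: wnorm2_def L_def A_def u_def)
  moreover have "2 * (3*M) * (\<Sum>k\<in>{1..L}. B k * (u k)\<^sup>2) \<le> 2 * (3*M) * (2 * pnorm2 n 0 m f)"
    unfolding L_def B_def u_def using n0 sqrt_index_ratio_le_2[OF n]
    by (intro mult_left_mono wnorm2_dominates) (simp_all add: M_def divide_right_mono)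
  moreover have "(\<Sum>k\<in>{1..L-1}. D k * (d k)\<^sup>2) \<le> 2 * pnorm2 n 1 (Suc m) f"
    using half_next_level[OF n] unfolding L_def D_def d_def by simp
  ultimately show ?thesis using hardy unfolding M_def by linarith
qed

lemma power_increment_le:
  fixes x y :: real
  assumes "0 \<le> x" "x \<le> y"
  shows "y^(Suc b) - x^(Suc b) \<le> real (Suc b) * y^b * (y - x)"
proof (induction b)
  case (Suc b)
  have "y^(Suc (Suc b)) - x^(Suc (Suc b)) = y * (y^(Suc b) - x^(Suc b)) + x^(Suc b) * (y - x)"
    by (simp add: algebra_simps)
  also have "\<dots> \<le> y * (real (Suc b) * y^b * (y - x)) + y^(Suc b) * (y - x)"
    using assms Suc by (intro add_mono mult_left_mono mult_right_mono power_mono) auto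
  also have "\<dots> = real (Suc (Suc b)) * y^(Suc b) * (y - x)" by (simp add: algebra_simps)
  finally show ?case .
qed simp

lemma sqrt_increment_le:
  fixes x y n :: real
  assumes "0 < x" "x \<le> y" "0 < n" "y - x = 1 / n"
  shows "\<bar>sqrt y - sqrt x\<bar> \<le> 2 * (1 / sqrt y / n)"
proof -
  have sxy: "sqrt x \<le> sqrt y" and sy: "0 < sqrt y" using assms by simp_all
  have "(sqrt y - sqrt x) * (sqrt y + sqrt x) = 1 / n"
    using assms by (simp add: algebra_simps)
  moreover have "(sqrt y - sqrt x) * sqrt y \<le> (sqrt y - sqrt x) * (sqrt y + sqrt x)"
    using sxy assms(1) by (intro mult_left_mono) auto
  ultimately have "(sqrt y - sqrt x) * sqrt y \<le> 1 / n" by simp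
  then have "sqrt y - sqrt x \<le> 1 / sqrt y / n" using sy assms(3) by (simp add: field_simps)
  moreover have "0 \<le> 1 / sqrt y / n" using sy assms(3) by simp
  ultimately show ?thesis using sxy by linarith
qed

(* The weight x^(b+1) at consecutive grid points x <= y = x + 1/n satisfies the hypotheses
   of discrete_sup_bound with C = b+1, G = x^b/n and E = n x^(b+2). *)
lemma pow_sup_weight:
  fixes x y n :: real
  assumes "0 \<le> x" "x \<le> y" "0 < n" "y - x = 1 / n"
  shows "(x^(Suc b))\<^sup>2 \<le> (real b + 1) * (x^b / n) * (n * x^(b+2))
       \<and> (x^(Suc b))\<^sup>2 \<le> (real b + 1) * (y^b / n) * (n * x^(b+2))
       \<and> \<bar>y^(Suc b) - x^(Suc b)\<bar> \<le> (real b + 1) * (y^b / n)"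
proof -
  have "y^(Suc b) - x^(Suc b) \<le> (real b + 1) * (y^b / n)"
    using power_increment_le[OF assms(1,2), of b] unfolding assms(4) by (simp add: field_simps)
  moreover have "x^(Suc b) \<le> y^(Suc b)" using assms by (intro power_mono) auto
  ultimately show ?thesis
    using pow_cutoff_bound[OF assms(1) order_refl, of 1 n "real b + 1" b]
      pow_cutoff_bound[OF assms(1,2), of 1 n "real b + 1" b] assms(3) by simp
qed

(* The same for the weight sqrt x, with C = 2, G = x^(-1/2)/n and E = n x sqrt x. *)
lemma half_sup_weight:
  fixes x y n :: real
  assumes "0 < x" "x \<le> y" "y \<le> 4 * x" "0 < n" "y - x = 1 / n"
  shows "(sqrt x)\<^sup>2 \<le> 2 * (1 / sqrt x / n) * (n * x * sqrt x)
       \<and> (sqrt x)\<^sup>2 \<le> 2 * (1 / sqrt y / n) * (n * x * sqrt x)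
       \<and> \<bar>sqrt y - sqrt x\<bar> \<le> 2 * (1 / sqrt y / n)"
proof -
  have "(sqrt x)\<^sup>2 \<le> 2 * (1 / sqrt z / n) * (n * x * sqrt x)" if "x \<le> z" "z \<le> 4 * x" for z
  proof -
    have "(2 * sqrt x * 1)\<^sup>2 \<le> 8 * (1 / sqrt z / n) * (n * x * sqrt x)"
      using half_cutoff_bound[of x z 1 n] that assms by simp
    moreover have "(2 * sqrt x * 1)\<^sup>2 = 4 * (sqrt x)\<^sup>2" by (simp add: power_mult_distrib)
    ultimately show ?thesis unfolding mult.assoc by linarith
  qed
  then show ?thesis using sqrt_increment_le[OF assms(1,2,4,5)] assms by simp
qed

lemma sup_pow:
  assumes n: "1 \<le> n" and k: "1 \<le> k" "k \<le> n + 1 - m"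
  shows "(real k / real n)^(Suc b) * (norm (fwdpow n m f k))\<^sup>2
     \<le> (2 * real (m+1) + real b + 3) * pnorm2 n b m f + 2 * (real b + 1) * pnorm2 n (b+2) (Suc m) f"
proof -
  define L where "L = n + 1 - m"
  define u where "u k = norm (fwdpow n m f k)" for k
  define d where "d k = norm (fwdpow n (Suc m) f k) / real n" for k
  define W where "W l = (real l / real n)^(Suc b)" for l
  define G where "G l = (real l / real n)^b / real n" for l
  define E where "E l = real n * (real l / real n)^(b+2)" for l
  define C where "C = real b + 1"
  define M where "M = real (m+1)"
  have L1: "1 \<le> L" and n0: "0 < real n" using k n by (simp_all add: L_def)
  have nM: "real n \<le> M * real L" using range_length_bound L1 by (simp add: M_def L_def)
  have main: "W k * (u k)\<^sup>2 \<le> (\<Sum>l\<in>{1..L}. W l * (u l)\<^sup>2) / real L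
      + (C + 2) * (\<Sum>l\<in>{1..L}. G l * (u l)\<^sup>2) + 2 * C * (\<Sum>l\<in>{1..L-1}. E l * (d l)\<^sup>2)"
  proof (rule discrete_sup_bound[OF L1])
    show "1 \<le> k" "k \<le> L" using k by (auto simp: L_def)
    show "\<bar>u (Suc l) - u l\<bar> \<le> d l" for l unfolding u_def d_def using norm_fwdpow_step[OF n] .
    show "(W l)\<^sup>2 \<le> C * G l * E l \<and> (W l)\<^sup>2 \<le> C * G (Suc l) * E l \<and> \<bar>W (Suc l) - W l\<bar> \<le> C * G (Suc l)"
      if "1 \<le> l" "l < L" for l
    proof -
      have x: "0 \<le> real l / real n" "real l / real n \<le> real (Suc l) / real n"
        and dx: "real (Suc l) / real n - real l / real n = 1 / real n"
        using n0 by (simp_all add: divide_right_mono field_simps)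
      show ?thesis unfolding W_def G_def E_def C_def by (rule pow_sup_weight[OF x n0 dx])
    qed
  qed (use n0 in \<open>auto simp: u_def d_def C_def G_def W_def\<close>)
  have "(\<Sum>l\<in>{1..L}. W l * (u l)\<^sup>2) / real L \<le> 2 * M * pnorm2 n b m f"
  proof (rule mean_le_of_total_le[OF _ pnorm2_nonneg nM L1])
    show "(\<Sum>l\<in>{1..L}. W l * (u l)\<^sup>2) \<le> 2 * real n * pnorm2 n b m f"
      unfolding L_def W_def u_def
    proof (rule wnorm2_dominates)
      fix l assume "1 \<le> l" "l \<le> n + 1 - m"
      then have "(real l / real n) * (real l / real n)^b \<le> 2 * (real l / real n)^b"
        using index_ratio_le_2[OF n] by (intro mult_right_mono) auto
      then show "(real l / real n)^(Suc b) \<le> 2 * real n * ((real l / real n)^b / real n)"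
        using n0 by simp
    qed
  qed
  moreover have "(C + 2) * (\<Sum>l\<in>{1..L}. G l * (u l)\<^sup>2) \<le> (C + 2) * (1 * pnorm2 n b m f)"
    unfolding L_def G_def u_def by (intro mult_left_mono wnorm2_dominates) (simp_all add: C_def)
  moreover have "2 * C * (\<Sum>l\<in>{1..L-1}. E l * (d l)\<^sup>2) \<le> 2 * C * (1 * pnorm2 n (b+2) (Suc m) f)"
  proof -
    have "L - 1 = n - m" by (simp add: L_def)
    then show ?thesis unfolding E_def d_def C_def
      by (simp only:) (intro mult_left_mono wnorm2_dominates_next[OF n], simp_all)
  qed
  ultimately show ?thesis using main unfolding W_def u_def M_def C_def by (simp add: algebra_simps)
qed

lemma sup_half:
  assumes n: "1 \<le> n" and k: "1 \<le> k" "k \<le> n + 1 - m"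
  shows "sqrt (real k / real n) * (norm (fwdpow n m f k))\<^sup>2
     \<le> (2 * real (m+1) + 4) * hnorm2 n m f + 8 * pnorm2 n 1 (Suc m) f"
proof -
  define L where "L = n + 1 - m"
  define u where "u k = norm (fwdpow n m f k)" for k
  define d where "d k = norm (fwdpow n (Suc m) f k) / real n" for k
  define W where "W l = sqrt (real l / real n)" for l
  define G where "G l = 1 / sqrt (real l / real n) / real n" for l
  define E where "E l = real n * (real l / real n) * sqrt (real l / real n)" for l
  define M where "M = real (m+1)"
  have L1: "1 \<le> L" and n0: "0 < real n" using k n by (simp_all add: L_def)
  have nM: "real n \<le> M * real L" using range_length_bound L1 by (simp add: M_def L_def)
  have main: "W k * (u k)\<^sup>2 \<le> (\<Sum>l\<in>{1..L}. W l * (u l)\<^sup>2) / real L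
      + (2 + 2) * (\<Sum>l\<in>{1..L}. G l * (u l)\<^sup>2) + 2 * 2 * (\<Sum>l\<in>{1..L-1}. E l * (d l)\<^sup>2)"
  proof (rule discrete_sup_bound[OF L1])
    show "1 \<le> k" "k \<le> L" using k by (auto simp: L_def)
    show "\<bar>u (Suc l) - u l\<bar> \<le> d l" for l unfolding u_def d_def using norm_fwdpow_step[OF n] .
    show "(W l)\<^sup>2 \<le> 2 * G l * E l \<and> (W l)\<^sup>2 \<le> 2 * G (Suc l) * E l \<and> \<bar>W (Suc l) - W l\<bar> \<le> 2 * G (Suc l)"
      if "1 \<le> l" "l < L" for l
    proof -
      have "0 < real l / real n" "real l / real n \<le> real (Suc l) / real n"
        "real (Suc l) / real n \<le> 4 * (real l / real n)"
        "real (Suc l) / real n - real l / real n = 1 / real n"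
        using n0 that by (simp_all add: divide_right_mono diff_divide_distrib field_simps)
      then show ?thesis unfolding W_def G_def E_def using n0 by (intro half_sup_weight)
    qed
  qed (use n0 in \<open>auto simp: u_def d_def G_def W_def\<close>)
  have "(\<Sum>l\<in>{1..L}. W l * (u l)\<^sup>2) / real L \<le> 2 * M * hnorm2 n m f"
  proof (rule mean_le_of_total_le[OF _ hnorm2_nonneg nM L1])
    show "(\<Sum>l\<in>{1..L}. W l * (u l)\<^sup>2) \<le> 2 * real n * hnorm2 n m f"
      unfolding L_def W_def u_def
    proof (rule wnorm2_dominates)
      fix l assume l: "1 \<le> l" "l \<le> n + 1 - m"
      define x where "x = real l / real n"
      have "0 < x" "x \<le> 2" using l n0 index_ratio_le_2[OF n l(2)] by (simp_all add: x_def)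
      then show "sqrt (real l / real n) \<le> 2 * real n * (1 / sqrt (real l / real n) / real n)"
        unfolding x_def[symmetric] using n0 by (simp add: field_simps)
    qed
  qed
  moreover have "(\<Sum>l\<in>{1..L}. G l * (u l)\<^sup>2) = hnorm2 n m f"
    by (simp add: wnorm2_def L_def G_def u_def)
  moreover have "(\<Sum>l\<in>{1..L-1}. E l * (d l)\<^sup>2) \<le> 2 * pnorm2 n 1 (Suc m) f"
    using half_next_level[OF n] unfolding L_def E_def d_def by simp
  ultimately show ?thesis using main unfolding W_def u_def M_def by (simp add: algebra_simps)
qed

definition diag_energy :: "nat \<Rightarrow> nat \<Rightarrow> (nat \<Rightarrow> 'a::real_normed_vector) \<Rightarrow> real" where
  "diag_energy n M f = (\<Sum>l\<in>{1..M}. pnorm2 n l l f)"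

lemma diag_energy_nonneg: "0 \<le> diag_energy n M f"
  unfolding diag_energy_def by (intro sum_nonneg pnorm2_nonneg)

lemma diag_energy_mono: "M \<le> M' \<Longrightarrow> diag_energy n M f \<le> diag_energy n M' f"
  unfolding diag_energy_def by (intro sum_mono2) (auto intro: pnorm2_nonneg)

lemma pnorm2_le_diag_energy: "1 \<le> l \<Longrightarrow> l \<le> M \<Longrightarrow> pnorm2 n l l f \<le> diag_energy n M f"
  unfolding diag_energy_def by (rule member_le_sum) (auto intro: pnorm2_nonneg)

lemma pnorm2_le_diag_energy_iter:
  assumes "1 \<le> m" "j \<le> m"
  shows "\<exists>C\<ge>0. \<forall>n (f :: nat \<Rightarrow> 'a::real_normed_vector). 1 \<le> n \<longrightarrow>
           pnorm2 n (m - j) m f \<le> C * diag_energy n (m + j) f"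
  using assms
proof (induction j arbitrary: m)
  case 0
  then show ?case by (intro exI[of _ 1]) (simp add: pnorm2_le_diag_energy)
next
  case (Suc j)
  obtain C1 where C1: "0 \<le> C1" "\<And>n (f :: nat \<Rightarrow> 'a). 1 \<le> n \<Longrightarrow> pnorm2 n (m - j) m f \<le> C1 * diag_energy n (m + j) f"
    using Suc.IH[of m] Suc.prems by auto
  obtain C2 where C2: "0 \<le> C2"
    "\<And>n (f :: nat \<Rightarrow> 'a). 1 \<le> n \<Longrightarrow> pnorm2 n (Suc m - j) (Suc m) f \<le> C2 * diag_energy n (Suc m + j) f"
    using Suc.IH[of "Suc m"] Suc.prems by auto
  show ?case
  proof (intro exI[of _ "4 * real (m+1) * C1 + 4 * C2"] conjI allI impI)
    fix n :: nat and f :: "nat \<Rightarrow> 'a" assume n: "1 \<le> n"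
    have "m - Suc j + 1 = m - j" "m - Suc j + 2 = Suc m - j" using Suc.prems by auto
    then have hardy: "pnorm2 n (m - Suc j) m f
        \<le> 4 * real (m+1) * pnorm2 n (m - j) m f + 4 * pnorm2 n (Suc m - j) (Suc m) f"
      using hardy_pow[OF n, of "m - Suc j" m f] by simp
    have "C1 * diag_energy n (m + j) f \<le> C1 * diag_energy n (m + Suc j) f"
      using C1(1) by (intro mult_left_mono diag_energy_mono) auto
    then have "pnorm2 n (m - j) m f \<le> C1 * diag_energy n (m + Suc j) f"
      using C1(2)[OF n, of f] by linarith
    moreover have "pnorm2 n (Suc m - j) (Suc m) f \<le> C2 * diag_energy n (m + Suc j) f"
      using C2(2)[OF n, of f] by simp
    ultimately show "pnorm2 n (m - Suc j) m f \<le> (4 * real (m+1) * C1 + 4 * C2) * diag_energy n (m + Suc j) f"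
      by (intro le_combination[OF hardy]) auto
  qed (use C1 C2 in simp)
qed

definition sw_sum :: "nat \<Rightarrow> real \<Rightarrow> nat \<Rightarrow> nat \<Rightarrow> (nat \<Rightarrow> 'a::real_normed_vector) \<Rightarrow> real" where
  "sw_sum n r N m g = (1 / real n) * (\<Sum>k\<in>{1..N}. sw n r k * (norm (fwdpow n m g k))\<^sup>2)"

lemma energy_eq_sw_sum:
  "energy n M eta etad
     = (\<Sum>l\<le>M. sw_sum n (real l) (n - l div 2) l etad + sw_sum n (real (Suc l)) (n - l div 2) (Suc l) eta)"
  unfolding energy_def sw_sum_def sum_distrib_left distrib_left sum.distrib by (simp add: add.commute)

lemma sw_sum_nonneg: "1 \<le> n \<Longrightarrow> 0 \<le> sw_sum n (real r) N m g"
  unfolding sw_sum_def by (intro mult_nonneg_nonneg sum_nonneg) (auto intro: sw_nat_nonneg)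

(* Since (k/n)^l <= s_k^(l), P(l,l) is below the corresponding energy summand whenever the
   energy range 1..N covers 1..n+1-l. *)
lemma pnorm2_le_sw_sum:
  assumes n: "1 \<le> n" and N: "n + 1 - l \<le> N"
  shows "pnorm2 n l l g \<le> sw_sum n (real l) N l g"
proof -
  have "1 * pnorm2 n l l g \<le> (1 / real n) * (\<Sum>k\<in>{1..n+1-l}. sw n (real l) k * (norm (fwdpow n l g k))\<^sup>2)"
    unfolding sum_distrib_left mult.assoc[symmetric]
    by (rule wnorm2_dominated) (use sw_nat_bounds(1)[OF n] in \<open>auto simp: divide_right_mono\<close>)
  then have "pnorm2 n l l g \<le> (1 / real n) * (\<Sum>k\<in>{1..n+1-l}. sw n (real l) k * (norm (fwdpow n l g k))\<^sup>2)"
    by simp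
  also have "\<dots> \<le> sw_sum n (real l) N l g"
    unfolding sw_sum_def using N sw_nat_nonneg[OF n]
    by (intro mult_left_mono sum_mono2) auto
  finally show ?thesis .
qed

lemma diag_energy_etad_le_energy:
  assumes n: "1 \<le> n"
  shows "diag_energy n M etad \<le> energy n M eta etad"
proof -
  have "diag_energy n M etad \<le> (\<Sum>l\<in>{1..M}. sw_sum n (real l) (n - l div 2) l etad)"
    unfolding diag_energy_def by (intro sum_mono pnorm2_le_sw_sum[OF n]) auto
  also have "\<dots> \<le> (\<Sum>l\<le>M. sw_sum n (real l) (n - l div 2) l etad)"
    by (intro sum_mono2) (auto intro: sw_sum_nonneg[OF n])
  also have "\<dots> \<le> energy n M eta etad"
    unfolding energy_eq_sw_sum
    by (intro sum_mono) (simp add: sw_sum_nonneg[OF n, of "Suc _", simplified])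
  finally show ?thesis .
qed

lemma diag_energy_eta_le_energy:
  assumes n: "1 \<le> n"
  shows "diag_energy n (Suc M) eta \<le> energy n M eta etad"
proof -
  have "diag_energy n (Suc M) eta = (\<Sum>l\<le>M. pnorm2 n (Suc l) (Suc l) eta)"
    unfolding diag_energy_def atMost_atLeast0 using sum.shift_bounds_cl_Suc_ivl[of "\<lambda>l. pnorm2 n l l eta" 0 M]
    by simp
  also have "\<dots> \<le> (\<Sum>l\<le>M. sw_sum n (real (Suc l)) (n - l div 2) (Suc l) eta)"
    by (intro sum_mono pnorm2_le_sw_sum[OF n]) auto
  also have "\<dots> \<le> energy n M eta etad"
    unfolding energy_eq_sw_sum by (intro sum_mono) (simp add: sw_sum_nonneg[OF n])
  finally show ?thesis .
qed

(* The seminorms of the theorem in terms of P: integer weights are at most r! (k/n)^r. *)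
lemma snorm2_le_pnorm2:
  assumes n: "1 \<le> n"
  shows "snorm2 n (real r) m f \<le> fact r * pnorm2 n r m f"
  unfolding snorm2_def sum_distrib_left mult.assoc[symmetric]
  by (rule wnorm2_dominates) (use sw_nat_bounds(2)[OF n] in \<open>auto simp: divide_right_mono\<close>)

lemma supnorm2_le:
  assumes "0 \<le> X" "\<And>k. 1 \<le> k \<Longrightarrow> k \<le> n + 1 - m \<Longrightarrow> sw n r k * (norm (fwdpow n m f k))\<^sup>2 \<le> X"
  shows "supnorm2 n r m f \<le> X"
  unfolding supnorm2_def using assms by (auto simp: Max_le_iff)

lemma snorm2_bound:
  assumes "1 \<le> i" "j \<le> i"
  shows "\<exists>C\<ge>0. \<forall>n (f :: nat \<Rightarrow> 'a::real_normed_vector). 1 \<le> n \<longrightarrow>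
           snorm2 n (real (i - j)) i f \<le> C * diag_energy n (i + j) f"
proof -
  obtain c where c: "0 \<le> c" "\<And>n (f :: nat \<Rightarrow> 'a). 1 \<le> n \<Longrightarrow> pnorm2 n (i - j) i f \<le> c * diag_energy n (i + j) f"
    using pnorm2_le_diag_energy_iter[OF assms] by blast
  show ?thesis
  proof (intro exI[of _ "fact (i - j) * c"] conjI allI impI)
    fix n :: nat and f :: "nat \<Rightarrow> 'a" assume n: "1 \<le> n"
    have "snorm2 n (real (i - j)) i f \<le> fact (i - j) * pnorm2 n (i - j) i f" by (rule snorm2_le_pnorm2[OF n])
    also have "\<dots> \<le> fact (i - j) * (c * diag_energy n (i + j) f)" using c(2)[OF n] by (intro mult_left_mono) auto
    finally show "snorm2 n (real (i - j)) i f \<le> fact (i - j) * c * diag_energy n (i + j) f" by (simp add: mult.assoc)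
  qed (use c in simp)
qed

lemma supnorm2_bound:
  assumes "j < i"
  shows "\<exists>C\<ge>0. \<forall>n (f :: nat \<Rightarrow> 'a::real_normed_vector). 1 \<le> n \<longrightarrow>
           supnorm2 n (real (i - j)) i f \<le> C * diag_energy n (Suc (i + j)) f"
proof -
  define a where "a = i - j"
  define p where "p = 2 * real (i+1) + real (a - 1) + 3"
  define q where "q = 2 * (real (a - 1) + 1)"
  obtain c1 where c1: "0 \<le> c1"
    "\<And>n (f :: nat \<Rightarrow> 'a). 1 \<le> n \<Longrightarrow> pnorm2 n (i - Suc j) i f \<le> c1 * diag_energy n (i + Suc j) f"
    using pnorm2_le_diag_energy_iter[of i "Suc j"] assms by auto
  obtain c2 where c2: "0 \<le> c2"
    "\<And>n (f :: nat \<Rightarrow> 'a). 1 \<le> n \<Longrightarrow> pnorm2 n (Suc i - j) (Suc i) f \<le> c2 * diag_energy n (Suc i + j) f"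
    using pnorm2_le_diag_energy_iter[of "Suc i" j] assms by auto
  have a: "Suc (a - 1) = a" "a - 1 = i - Suc j" "a - 1 + 2 = Suc i - j" using assms by (auto simp: a_def)
  show ?thesis
  proof (intro exI[of _ "fact a * (p * c1 + q * c2)"] conjI allI impI)
    fix n :: nat and f :: "nat \<Rightarrow> 'a" assume n: "1 \<le> n"
    show "supnorm2 n (real (i - j)) i f \<le> fact a * (p * c1 + q * c2) * diag_energy n (Suc (i + j)) f"
    proof (rule supnorm2_le)
      show "0 \<le> fact a * (p * c1 + q * c2) * diag_energy n (Suc (i + j)) f"
        using c1(1) c2(1) by (intro mult_nonneg_nonneg add_nonneg_nonneg diag_energy_nonneg) (simp_all add: p_def q_def)
      fix k assume k: "1 \<le> k" "k \<le> n + 1 - i"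
      have weighted: "(real k / real n)^a * (norm (fwdpow n i f k))\<^sup>2 \<le> (p * c1 + q * c2) * diag_energy n (Suc (i + j)) f"
      proof (rule le_combination)
        show "(real k / real n)^a * (norm (fwdpow n i f k))\<^sup>2
            \<le> p * pnorm2 n (i - Suc j) i f + q * pnorm2 n (Suc i - j) (Suc i) f"
          using sup_pow[OF n k, of "a - 1" f] unfolding p_def q_def a(1) a(3) unfolding a(2) .
      qed (use c1(2)[OF n, of f] c2(2)[OF n, of f] in \<open>simp_all add: p_def q_def\<close>)
      have "sw n (real a) k * (norm (fwdpow n i f k))\<^sup>2 \<le> fact a * (real k / real n)^a * (norm (fwdpow n i f k))\<^sup>2"
        using sw_nat_bounds(2)[OF n k(1), of a] by (rule mult_right_mono) simp
      also have "\<dots> \<le> fact a * ((p * c1 + q * c2) * diag_energy n (Suc (i + j)) f)"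
        using weighted unfolding mult.assoc by (rule mult_left_mono) simp
      finally show "sw n (real (i - j)) k * (norm (fwdpow n i f k))\<^sup>2
          \<le> fact a * (p * c1 + q * c2) * diag_energy n (Suc (i + j)) f"
        unfolding a_def by (simp add: mult.assoc)
    qed
  qed (use c1 c2 in \<open>simp add: p_def q_def\<close>)
qed

lemma supnorm2_half_bound:
  assumes "1 \<le> i"
  shows "\<exists>C\<ge>0. \<forall>n (f :: nat \<Rightarrow> 'a::real_normed_vector). 1 \<le> n \<longrightarrow>
           supnorm2 n (1/2) i f \<le> C * diag_energy n (Suc (2 * i)) f"
proof -
  define p where "p = 2 * real (i+1) + 4"
  obtain c1 where c1: "0 \<le> c1"
    "\<And>n (f :: nat \<Rightarrow> 'a). 1 \<le> n \<Longrightarrow> pnorm2 n (i - i) i f \<le> c1 * diag_energy n (i + i) f"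
    using pnorm2_le_diag_energy_iter[of i i] assms by auto
  obtain c2 where c2: "0 \<le> c2"
    "\<And>n (f :: nat \<Rightarrow> 'a). 1 \<le> n \<Longrightarrow> pnorm2 n (Suc i - i) (Suc i) f \<le> c2 * diag_energy n (Suc i + i) f"
    using pnorm2_le_diag_energy_iter[of "Suc i" i] assms by auto
  show ?thesis
  proof (intro exI[of _ "12 * p * real (i+1) * c1 + (64 * p + 8) * c2"] conjI allI impI)
    fix n :: nat and f :: "nat \<Rightarrow> 'a" assume n: "1 \<le> n"
    have "pnorm2 n 0 i f \<le> c1 * diag_energy n (i + i) f" using c1(2)[OF n, of f] by simp
    also have "\<dots> \<le> c1 * diag_energy n (Suc (2 * i)) f" using c1(1) by (intro mult_left_mono diag_energy_mono) auto
    finally have P0: "pnorm2 n 0 i f \<le> c1 * diag_energy n (Suc (2 * i)) f" .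
    have P1: "pnorm2 n 1 (Suc i) f \<le> c2 * diag_energy n (Suc (2 * i)) f"
      using c2(2)[OF n, of f] by (simp add: mult_2)
    show "supnorm2 n (1/2) i f \<le> (12 * p * real (i+1) * c1 + (64 * p + 8) * c2) * diag_energy n (Suc (2 * i)) f"
    proof (rule supnorm2_le)
      show "0 \<le> (12 * p * real (i+1) * c1 + (64 * p + 8) * c2) * diag_energy n (Suc (2 * i)) f"
        using c1(1) c2(1) by (intro mult_nonneg_nonneg add_nonneg_nonneg diag_energy_nonneg) (simp_all add: p_def)
      fix k assume k: "1 \<le> k" "k \<le> n + 1 - i"
      have "sw n (1/2) k * (norm (fwdpow n i f k))\<^sup>2 \<le> sqrt (real k / real n) * (norm (fwdpow n i f k))\<^sup>2"
        using sw_half_le_sqrt[OF n k(1)] by (simp add: mult_right_mono)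
      also have "\<dots> \<le> p * hnorm2 n i f + 8 * pnorm2 n 1 (Suc i) f"
        using sup_half[OF n k, of f] by (simp add: p_def)
      also have "\<dots> \<le> (12 * p * real (i+1)) * pnorm2 n 0 i f + (64 * p + 8) * pnorm2 n 1 (Suc i) f"
        using mult_left_mono[OF hardy_half[OF n, of i f], of p] by (simp add: p_def algebra_simps)
      also have "\<dots> \<le> (12 * p * real (i+1) * c1 + (64 * p + 8) * c2) * diag_energy n (Suc (2 * i)) f"
        by (rule le_combination[OF order_refl P0 P1]) (simp_all add: p_def)
      finally show "sw n (1/2) k * (norm (fwdpow n i f k))\<^sup>2
          \<le> (12 * p * real (i+1) * c1 + (64 * p + 8) * c2) * diag_energy n (Suc (2 * i)) f" .
    qed
  qed (use c1 c2 in \<open>simp add: p_def\<close>)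
qed

(* The theorem: the bounds for eta use the position part of the energy (one level higher),
   those for etad the velocity part. *)
theorem lemma4p7:
  fixes i j :: nat
  assumes "1 \<le> i" and "j < i"
  shows "\<exists>C::real. \<forall>n::nat. \<forall>eta etad :: nat \<Rightarrow> 'a::euclidean_space.
    1 \<le> n \<longrightarrow> admissible n eta \<longrightarrow> admissible n etad \<longrightarrow>
      snorm2 n (real (i - j)) i eta \<le> C * energy n (i + j - 1) eta etad
    \<and> snorm2 n (real (i - j)) i etad \<le> C * energy n (i + j) eta etad
    \<and> supnorm2 n (real (i - j)) i eta \<le> C * energy n (i + j) eta etad
    \<and> supnorm2 n (real (i - j)) i etad \<le> C * energy n (i + j + 1) eta etad
    \<and> supnorm2 n (1/2) i etad \<le> C * energy n (2 * i + 1) eta etad"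
proof -
  obtain C1 where C1: "0 \<le> C1" "\<And>n (f :: nat \<Rightarrow> 'a). 1 \<le> n \<Longrightarrow>
      snorm2 n (real (i - j)) i f \<le> C1 * diag_energy n (i + j) f"
    using snorm2_bound[of i j] assms by auto
  obtain C2 where C2: "0 \<le> C2" "\<And>n (f :: nat \<Rightarrow> 'a). 1 \<le> n \<Longrightarrow>
      supnorm2 n (real (i - j)) i f \<le> C2 * diag_energy n (Suc (i + j)) f"
    using supnorm2_bound[OF assms(2)] by auto
  obtain C3 where C3: "0 \<le> C3" "\<And>n (f :: nat \<Rightarrow> 'a). 1 \<le> n \<Longrightarrow>
      supnorm2 n (1/2) i f \<le> C3 * diag_energy n (Suc (2 * i)) f"
    using supnorm2_half_bound[OF assms(1)] by auto
  have le_sum: "C1 \<le> C1 + C2 + C3" "C2 \<le> C1 + C2 + C3" "C3 \<le> C1 + C2 + C3" using C1 C2 C3 by auto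
  show ?thesis
  proof (intro exI[of _ "C1 + C2 + C3"] allI impI conjI)
    fix n :: nat and eta etad :: "nat \<Rightarrow> 'a" assume n: "1 \<le> n"
    note bound = le_scaled_bound[OF _ _ _ diag_energy_nonneg]
    have "i + j = Suc (i + j - 1)" using assms by simp
    then show "snorm2 n (real (i - j)) i eta \<le> (C1 + C2 + C3) * energy n (i + j - 1) eta etad"
      using diag_energy_eta_le_energy[OF n, of "i + j - 1" eta etad] by (intro bound[OF C1(2)[OF n] C1(1) le_sum(1)]) simp
    show "snorm2 n (real (i - j)) i etad \<le> (C1 + C2 + C3) * energy n (i + j) eta etad"
      by (rule bound[OF C1(2)[OF n] C1(1) le_sum(1) diag_energy_etad_le_energy[OF n]])
    show "supnorm2 n (real (i - j)) i eta \<le> (C1 + C2 + C3) * energy n (i + j) eta etad"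
      by (rule bound[OF C2(2)[OF n] C2(1) le_sum(2) diag_energy_eta_le_energy[OF n]])
    show "supnorm2 n (real (i - j)) i etad \<le> (C1 + C2 + C3) * energy n (i + j + 1) eta etad"
      using bound[OF C2(2)[OF n] C2(1) le_sum(2) diag_energy_etad_le_energy[OF n]] by simp
    show "supnorm2 n (1/2) i etad \<le> (C1 + C2 + C3) * energy n (2 * i + 1) eta etad"
      using bound[OF C3(2)[OF n] C3(1) le_sum(3) diag_energy_etad_le_energy[OF n]] by simp
  qed
qed

end
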